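(* Let $\mathcal I$ be an instance of fair representation $k$-median. Run an $\alpha$-approximation algorithm for (unconstrained) $k$-median on the data points of $\mathcal I$, obtaining centers $\overline{\mathcal C}=\{\overline c_1,\dots,\overline c_k\}$ and an assignment $\phi$ of each point to a nearest center, and let $\mathcal I'$ be the reduced instance obtained by moving each data point $x$ to location $\phi(x)$ (same points, groups, and fairness constraints). Let $\mathrm{OPT}_{\mathcal I}$ and $\mathrm{OPT}_{\mathcal I'}$ be the costs of optimal fair clusterings of $\mathcal I$ and $\mathcal I'$. If there is a $\beta_k$-approximation algorithm for fair representation $k$-median on $\mathcal I'$, then there is an $(\alpha\beta_k+\alpha+\beta_k)$-approximation algorithm for fair representation $k$-median on $\mathcal I$.
   Context: Fair representation $k$-median: data points $X$, each with a location in a metric space $(M,d)$ and belonging to one of $\ell$ groups $X_1,\dots,X_\ell$; parameters $0\le\alpha_j\le\beta_j\le1$. A solution is $k$ centers and an assignment of points to centers giving clusters $C_1,\dots,C_k$; it is fair if $\alpha_j|C_i|\le|C_i\cap X_j|\le\beta_j|C_i|$ for all $i,j$. Its cost is the sum over points of the distance from the point's location to its center. A $\rho$-approximation algorithm returns a fair clustering of cost at most $\rho$ times the optimum fair cost. The (unconstrained) $k$-median problem is the same without fairness constraints. *)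

theory Defs
  imports Complex_Main
begin

text \<open>A (possibly fair) k-median instance: a finite set X of data points, locations
  loc :: 'p => 'm in a metric space, group labels grp x < l, fairness bounds lo j, hi j.\<close>

definition is_solution :: "'p set \<Rightarrow> nat \<Rightarrow> ('p \<Rightarrow> nat) \<Rightarrow> bool" where
  "is_solution X k \<sigma> \<longleftrightarrow> (\<forall>x\<in>X. \<sigma> x < k)"

definition cluster :: "'p set \<Rightarrow> ('p \<Rightarrow> nat) \<Rightarrow> nat \<Rightarrow> 'p set" where
  "cluster X \<sigma> i = {x\<in>X. \<sigma> x = i}"

definition kmed_cost :: "'p set \<Rightarrow> ('p \<Rightarrow> 'm::metric_space) \<Rightarrow> (nat \<Rightarrow> 'm) \<Rightarrow> ('p \<Rightarrow> nat) \<Rightarrow> real" where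
  "kmed_cost X loc c \<sigma> = (\<Sum>x\<in>X. dist (loc x) (c (\<sigma> x)))"

definition is_fair ::
  "'p set \<Rightarrow> ('p \<Rightarrow> nat) \<Rightarrow> nat \<Rightarrow> (nat \<Rightarrow> real) \<Rightarrow> (nat \<Rightarrow> real) \<Rightarrow> nat \<Rightarrow> ('p \<Rightarrow> nat) \<Rightarrow> bool" where
  "is_fair X grp l lo hi k \<sigma> \<longleftrightarrow> is_solution X k \<sigma> \<and>
     (\<forall>i<k. \<forall>j<l.
        lo j * real (card (cluster X \<sigma> i)) \<le> real (card (cluster X \<sigma> i \<inter> {x. grp x = j})) \<and>
        real (card (cluster X \<sigma> i \<inter> {x. grp x = j})) \<le> hi j * real (card (cluster X \<sigma> i)))"

definition opt_kmedian :: "'p set \<Rightarrow> ('p \<Rightarrow> 'm::metric_space) \<Rightarrow> nat \<Rightarrow> real" where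
  "opt_kmedian X loc k = (INF p \<in> {(c, \<sigma>). is_solution X k \<sigma>}. kmed_cost X loc (fst p) (snd p))"

definition opt_fair ::
  "'p set \<Rightarrow> ('p \<Rightarrow> 'm::metric_space) \<Rightarrow> ('p \<Rightarrow> nat) \<Rightarrow> nat \<Rightarrow> (nat \<Rightarrow> real) \<Rightarrow> (nat \<Rightarrow> real) \<Rightarrow> nat \<Rightarrow> real" where
  "opt_fair X loc grp l lo hi k =
     (INF p \<in> {(c, \<sigma>). is_fair X grp l lo hi k \<sigma>}. kmed_cost X loc (fst p) (snd p))"

end

theory Submission
  imports Defs
begin

text \<open>Moving every point \<open>x\<close> to \<open>\<phi> x\<close> changes the cost of any clustering by at most
  \<open>D = (\<Sum>x\<in>X. dist (loc x) (\<phi> x))\<close>, the cost of the unconstrained solution, which is at most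
  \<open>\<alpha> OPT\<^sub>k\<^sub>m\<^sub>e\<^sub>d \<le> \<alpha> OPT\<^sub>I\<close>. Hence \<open>OPT\<^sub>I\<^sub>' \<le> OPT\<^sub>I + D\<close>, and the fair solution found on the
  reduced instance costs on the original one at most
  \<open>D + \<beta>\<^sub>k OPT\<^sub>I\<^sub>' \<le> (1 + \<beta>\<^sub>k) D + \<beta>\<^sub>k OPT\<^sub>I \<le> (\<alpha>\<beta>\<^sub>k + \<alpha> + \<beta>\<^sub>k) OPT\<^sub>I\<close>.\<close>

lemma kmed_cost_nonneg: "0 \<le> kmed_cost X loc c \<sigma>"
  unfolding kmed_cost_def by (simp add: sum_nonneg)

lemma kmed_cost_move_locations:
  "kmed_cost X loc' c \<sigma> \<le> (\<Sum>x\<in>X. dist (loc x) (loc' x)) + kmed_cost X loc c \<sigma>"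
proof -
  have "kmed_cost X loc' c \<sigma> \<le> (\<Sum>x\<in>X. dist (loc x) (loc' x) + dist (loc x) (c (\<sigma> x)))"
    unfolding kmed_cost_def by (rule sum_mono) (metis dist_commute dist_triangle)
  then show ?thesis
    unfolding kmed_cost_def by (simp add: sum.distrib)
qed

lemma bdd_below_kmed_cost_image:
  "bdd_below ((\<lambda>p. kmed_cost X loc (fst p) (snd p)) ` P)"
  by (rule bdd_belowI2) (rule kmed_cost_nonneg)

lemma opt_fair_le_kmed_cost:
  "is_fair X grp l lo hi k \<sigma> \<Longrightarrow> opt_fair X loc grp l lo hi k \<le> kmed_cost X loc c \<sigma>"
  unfolding opt_fair_def
  by (rule cINF_lower2[OF bdd_below_kmed_cost_image, of "(c, \<sigma>)"]) auto

lemma opt_kmedian_le_opt_fair: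
  assumes "is_fair X grp l lo hi k \<sigma>"
  shows "opt_kmedian X loc k \<le> opt_fair X loc grp l lo hi k"
  unfolding opt_kmedian_def opt_fair_def
proof (rule cINF_superset_mono)
  show "{(c, \<sigma>). is_fair X grp l lo hi k \<sigma>} \<noteq> {}"
    using assms by auto
  show "{(c, \<sigma>). is_fair X grp l lo hi k \<sigma>} \<subseteq> {(c, \<sigma>). is_solution X k \<sigma>}"
    unfolding is_fair_def by auto
qed (simp_all add: bdd_below_kmed_cost_image)

lemma opt_fair_move_locations:
  assumes "is_fair X grp l lo hi k \<sigma>"
  shows "opt_fair X loc' grp l lo hi k
           \<le> (\<Sum>x\<in>X. dist (loc x) (loc' x)) + opt_fair X loc grp l lo hi k"
proof -
  let ?D = "\<Sum>x\<in>X. dist (loc x) (loc' x)"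
  have "opt_fair X loc' grp l lo hi k - ?D \<le> kmed_cost X loc c \<sigma>"
    if "is_fair X grp l lo hi k \<sigma>" for c \<sigma>
  proof -
    have "opt_fair X loc' grp l lo hi k \<le> kmed_cost X loc' c \<sigma>"
      using that by (rule opt_fair_le_kmed_cost)
    also have "\<dots> \<le> ?D + kmed_cost X loc c \<sigma>"
      by (rule kmed_cost_move_locations)
    finally show ?thesis by simp
  qed
  then have "opt_fair X loc' grp l lo hi k - ?D \<le> opt_fair X loc grp l lo hi k"
    unfolding opt_fair_def [of X loc] using assms
    by (intro cINF_greatest) auto
  then show ?thesis by simp
qed

theorem claim2:
  fixes X :: "'p set" and loc :: "'p \<Rightarrow> 'm::metric_space"
    and grp :: "'p \<Rightarrow> nat" and l k :: nat and lo hi :: "nat \<Rightarrow> real"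
    and \<alpha> \<beta>k :: real
    and cbar :: "nat \<Rightarrow> 'm" and \<sigma>bar :: "'p \<Rightarrow> nat"
    and c' :: "nat \<Rightarrow> 'm" and \<sigma>' :: "'p \<Rightarrow> nat"
  assumes finX: "finite X"
    and grps: "\<forall>x\<in>X. grp x < l"
    and bounds: "\<forall>j<l. 0 \<le> lo j \<and> lo j \<le> hi j \<and> hi j \<le> 1"
    and ratios: "1 \<le> \<alpha>" "1 \<le> \<beta>k"
    \<comment> \<open>alpha-approximate unconstrained k-median solution, points assigned to a nearest center\<close>
    and unc_sol: "is_solution X k \<sigma>bar"
    and nearest: "\<forall>x\<in>X. \<forall>i<k. dist (loc x) (cbar (\<sigma>bar x)) \<le> dist (loc x) (cbar i)"
    and unc_approx: "kmed_cost X loc cbar \<sigma>bar \<le> \<alpha> * opt_kmedian X loc k"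
    \<comment> \<open>beta_k-approximate fair solution of the reduced instance (x moved to phi x = cbar (sigmabar x))\<close>
    and red_fair: "is_fair X grp l lo hi k \<sigma>'"
    and red_approx: "kmed_cost X (\<lambda>x. cbar (\<sigma>bar x)) c' \<sigma>' \<le>
                       \<beta>k * opt_fair X (\<lambda>x. cbar (\<sigma>bar x)) grp l lo hi k"
  shows "is_fair X grp l lo hi k \<sigma>' \<and>
         kmed_cost X loc c' \<sigma>' \<le> (\<alpha> * \<beta>k + \<alpha> + \<beta>k) * opt_fair X loc grp l lo hi k"
proof -
  let ?\<phi> = "\<lambda>x. cbar (\<sigma>bar x)"
  define D where "D = kmed_cost X loc cbar \<sigma>bar"
  define OPT where "OPT = opt_fair X loc grp l lo hi k"
  have D_to: "D = (\<Sum>x\<in>X. dist (loc x) (?\<phi> x))"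
    unfolding D_def kmed_cost_def ..
  have D_from: "D = (\<Sum>x\<in>X. dist (?\<phi> x) (loc x))"
    unfolding D_to by (simp add: dist_commute)
  have "D \<le> \<alpha> * opt_kmedian X loc k"
    using unc_approx unfolding D_def .
  also have "\<dots> \<le> \<alpha> * OPT"
    using opt_kmedian_le_opt_fair[OF red_fair] ratios unfolding OPT_def by simp
  finally have "D \<le> \<alpha> * OPT" .
  have OPT_reduced: "opt_fair X ?\<phi> grp l lo hi k \<le> D + OPT"
    unfolding D_to OPT_def by (rule opt_fair_move_locations[OF red_fair])
  have "kmed_cost X loc c' \<sigma>' \<le> D + kmed_cost X ?\<phi> c' \<sigma>'"
    unfolding D_from by (rule kmed_cost_move_locations)
  also have "\<dots> \<le> D + \<beta>k * (D + OPT)"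
    using red_approx mult_left_mono[OF OPT_reduced, of \<beta>k] ratios by linarith
  also have "\<dots> = (1 + \<beta>k) * D + \<beta>k * OPT"
    by algebra
  also have "\<dots> \<le> (1 + \<beta>k) * (\<alpha> * OPT) + \<beta>k * OPT"
    using \<open>D \<le> \<alpha> * OPT\<close> ratios by simp
  also have "\<dots> = (\<alpha> * \<beta>k + \<alpha> + \<beta>k) * OPT"
    by algebra
  finally show ?thesis
    using red_fair unfolding OPT_def by simp
qed

end
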